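(* Let $K=\mathbb{C}(t)=\mathbb{C}(\mathbb{P}^1)$. For every finite set $S$ of points of $\mathbb{P}^1(\mathbb{C})$, strong approximation outside $S$ fails for the $K$-variety $\mathbb{G}_{m,K}$.
   Context: Places of $K$ are identified with the points $P\in\mathbb{P}^1(\mathbb{C})$; $K_P$ is the completion at $P$, with its valuation topology. $\mathbb{A}_K$ is the ring of adèles of $K$ and $\mathbb{A}_K^S$ the adèles outside $S$. A $K$-variety $X$ satisfies strong approximation outside $S$ if the diagonal image of $X(K)$ is dense in the projection of $X(\mathbb{A}_K)$ to $X(\mathbb{A}_K^S)$; for $X=\mathbb{G}_{m,K}$, $X(K)=K^*$ and $X(\mathbb{A}_K^S)$ is the group of idèles outside $S$. *)

theory Defs
  imports "HOL-Analysis.Analysis"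
          "HOL-Computational_Algebra.Formal_Laurent_Series"
          "HOL-Computational_Algebra.Normalized_Fraction"
          "HOL-Computational_Algebra.Polynomial_Factorial"
          "HOL-Computational_Algebra.Field_as_Ring"
begin

text \<open>Places of K are the points of P^1(C): Some a is the point t = a, None is infinity.
  The completion K_P is the field of formal Laurent series C((u)) in a uniformiser u
  (u = t - a, resp. u = 1/t), with its valuation (metric) topology from the library.\<close>

type_synonym funfield = "complex poly fract"
type_synonym place = "complex option"

definition t_at :: "place \<Rightarrow> complex fls" where
  "t_at P = (case P of Some a \<Rightarrow> fls_const a + fls_X | None \<Rightarrow> fls_X_inv)"

definition poly_emb :: "place \<Rightarrow> complex poly \<Rightarrow> complex fls" where
  "poly_emb P p = poly (map_poly fls_const p) (t_at P)"

definition completion_emb :: "place \<Rightarrow> funfield \<Rightarrow> complex fls" where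
  "completion_emb P f = (case quot_of_fract f of (p, q) \<Rightarrow> poly_emb P p / poly_emb P q)"

definition is_unit_at :: "complex fls \<Rightarrow> bool" where
  "is_unit_at x \<longleftrightarrow> x \<noteq> 0 \<and> fls_subdegree x = 0"

text \<open>Ideles outside S (G_m(A_K^S)): families (x_P)_{P not in S} with x_P in K_P^*,
  and x_P in O_P^* for all but finitely many P; represented as functions which are
  0 at the places of S.\<close>
definition ideles :: "place set \<Rightarrow> (place \<Rightarrow> complex fls) set" where
  "ideles S = {x. (\<forall>P\<in>S. x P = 0) \<and> (\<forall>P. P \<notin> S \<longrightarrow> x P \<noteq> 0)
                 \<and> finite {P. P \<notin> S \<and> \<not> is_unit_at (x P)}}"

definition idele_basis :: "place set \<Rightarrow> (place \<Rightarrow> complex fls) set set" where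
  "idele_basis S = {{x \<in> ideles S. (\<forall>P\<in>T. x P \<in> U P) \<and>
                        (\<forall>P. P \<notin> S \<and> P \<notin> T \<longrightarrow> is_unit_at (x P))}
                    | T U. finite T \<and> T \<inter> S = {} \<and> (\<forall>P\<in>T. open (U P) \<and> 0 \<notin> U P)}"

definition idele_top :: "place set \<Rightarrow> (place \<Rightarrow> complex fls) topology" where
  "idele_top S = topology_generated_by (idele_basis S)"

definition diag :: "place set \<Rightarrow> funfield \<Rightarrow> (place \<Rightarrow> complex fls)" where
  "diag S f = (\<lambda>P. if P \<in> S then 0 else completion_emb P f)"

definition proj_away :: "place set \<Rightarrow> (place \<Rightarrow> complex fls) \<Rightarrow> (place \<Rightarrow> complex fls)" where
  "proj_away S x = (\<lambda>P. if P \<in> S then 0 else x P)"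

definition strong_approx_Gm :: "place set \<Rightarrow> bool" where
  "strong_approx_Gm S \<longleftrightarrow>
     proj_away S ` ideles {} \<subseteq> (idele_top S) closure_of (diag S ` {f. f \<noteq> 0})"

end

theory Submission
  imports Defs "HOL-Computational_Algebra.Fundamental_Theorem_Algebra"
begin

unbundle fps_syntax

text \<open>Write \<open>A\<close> for the finite set of affine points of \<open>S\<close>. A function \<open>f = p/q\<close> that is a unit
  at every place outside \<open>S\<close> has \<open>p\<close> and \<open>q\<close> vanishing only on \<open>A\<close>, so for fixed
  \<open>b\<^sub>0, b\<^sub>1 \<notin> A\<close> the value \<open>f(b\<^sub>1)/f(b\<^sub>0)\<close> is a product of integer powers of the finitely many
  numbers \<open>(b\<^sub>1 - z)/(b\<^sub>0 - z)\<close>, \<open>z \<in> A\<close>; these values form a countable set. Choosing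
  \<open>c \<in> \<complex>\<^sup>*\<close> outside it, the idele which is \<open>c\<close> at \<open>b\<^sub>1\<close> and \<open>1\<close> elsewhere has no
  approximation by \<open>K\<^sup>*\<close>: an \<open>f\<close> in its neighbourhood of units would satisfy
  \<open>f(b\<^sub>0) = 1\<close> and \<open>f(b\<^sub>1) = c\<close>.\<close>

lemma poly_emb_Some_pCons:
  "poly_emb (Some b) (pCons a p) = fls_const a + (fls_const b + fls_X) * poly_emb (Some b) p"
  by (cases "p = 0 \<and> a = 0") (simp_all add: poly_emb_def t_at_def map_poly_pCons)

lemma poly_emb_Some_nth_neg: "k < 0 \<Longrightarrow> poly_emb (Some b) p $$ k = 0"
  by (induction p arbitrary: k rule: pCons_induct)
    (simp_all add: poly_emb_Some_pCons poly_emb_def[of _ 0] distrib_right fls_X_times_conv_shift)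

lemma poly_emb_Some_nth_0: "poly_emb (Some b) p $$ 0 = poly p b"
  by (induction p rule: pCons_induct)
    (simp_all add: poly_emb_Some_pCons poly_emb_def[of _ 0] distrib_right fls_X_times_conv_shift poly_emb_Some_nth_neg)

lemma is_unit_at_iff_nth:
  "is_unit_at x \<longleftrightarrow> x $$ 0 \<noteq> 0 \<and> (\<forall>k<0. x $$ k = 0)"
  unfolding is_unit_at_def
  by (metis fls_eq0_below_subdegree fls_nonzeroI fls_subdegree_eqI nth_fls_subdegree_nonzero)

lemma is_unit_at_divide:
  fixes x y :: "complex fls"
  assumes x_int: "\<And>k. k < 0 \<Longrightarrow> x $$ k = 0" and y_int: "\<And>k. k < 0 \<Longrightarrow> y $$ k = 0"
    and no_common_zero: "x $$ 0 \<noteq> 0 \<or> y $$ 0 \<noteq> 0" and unit: "is_unit_at (x / y)"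
  shows "x $$ 0 \<noteq> 0" "y $$ 0 \<noteq> 0" "(x / y) $$ 0 = x $$ 0 / y $$ 0"
proof -
  have "x \<noteq> 0" "y \<noteq> 0"
    using unit fls_div_by_zero[of x] by (auto simp: is_unit_at_def)
  moreover have "0 \<le> fls_subdegree x" "0 \<le> fls_subdegree y"
    using x_int y_int by (auto intro: fls_subdegree_ge0I)
  ultimately have "x $$ 0 \<noteq> 0 \<longleftrightarrow> fls_subdegree x = 0" "y $$ 0 \<noteq> 0 \<longleftrightarrow> fls_subdegree y = 0"
    by (metis fls_eq0_below_subdegree nth_fls_subdegree_nonzero order_le_less)+
  moreover have "fls_subdegree x = fls_subdegree y"
    using unit \<open>x \<noteq> 0\<close> \<open>y \<noteq> 0\<close> by (simp add: is_unit_at_def fls_divide_subdegree)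
  ultimately show "x $$ 0 \<noteq> 0" "y $$ 0 \<noteq> 0" "(x / y) $$ 0 = x $$ 0 / y $$ 0"
    using no_common_zero fls_divide_nth_base[of x y] by auto
qed

lemma completion_emb_Some_unit:
  assumes pq: "quot_of_fract f = (p, q)" and unit: "is_unit_at (completion_emb (Some b) f)"
  shows "poly p b \<noteq> 0" "poly q b \<noteq> 0" "completion_emb (Some b) f $$ 0 = poly p b / poly q b"
proof -
  have "coprime p q"
    using quot_of_fract_in_normalized_fracts[of f] pq by (simp add: normalized_fracts_def)
  then have "poly_emb (Some b) p $$ 0 \<noteq> 0 \<or> poly_emb (Some b) q $$ 0 \<noteq> 0"
    using coprime_poly_0 by (simp add: poly_emb_Some_nth_0)
  from is_unit_at_divide[OF poly_emb_Some_nth_neg poly_emb_Some_nth_neg this]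
  show "poly p b \<noteq> 0" "poly q b \<noteq> 0" "completion_emb (Some b) f $$ 0 = poly p b / poly q b"
    using unit pq by (simp_all add: completion_emb_def poly_emb_Some_nth_0)
qed

lemma fls_nth_eq_if_dist_less_1:
  fixes x y :: "'a::group_add fls"
  assumes "dist x y < 1" "k \<le> 0"
  shows "x $$ k = y $$ k"
proof (cases "x = y")
  case False
  have "0 < fls_subdegree (x - y)"
  proof (rule ccontr)
    assume "\<not> 0 < fls_subdegree (x - y)"
    then have "1 \<le> dist x y"
      using False by (cases "fls_subdegree (x - y) = 0") (auto simp: dist_fls_def)
    then show False using assms(1) by simp
  qed
  then have "(x - y) $$ k = 0"
    using assms(2) by (intro fls_eq0_below_subdegree) simp
  then show ?thesis by simp
qed simp

lemma is_unit_at_if_dist_less_1: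
  assumes "is_unit_at c" "dist c y < 1"
  shows "is_unit_at y" "y $$ 0 = c $$ 0"
  using assms fls_nth_eq_if_dist_less_1[OF assms(2)] by (auto simp: is_unit_at_iff_nth)

lemma proj_away_in_ideles_if_units:
  assumes "\<And>P. is_unit_at (x P)"
  shows "proj_away S x \<in> ideles S"
  using assms by (simp add: ideles_def proj_away_def is_unit_at_def)

lemma strong_approx_Gm_unit_approx:
  assumes sa: "strong_approx_Gm S" and T: "finite T" "T \<inter> S = {}"
    and x_units: "\<And>P. is_unit_at (x P)"
  obtains f where "f \<noteq> 0" "\<And>P. P \<notin> S \<Longrightarrow> is_unit_at (completion_emb P f)"
    "\<And>P. P \<in> T \<Longrightarrow> completion_emb P f $$ 0 = x P $$ 0"
proof -
  define B where "B = {y \<in> ideles S. (\<forall>P\<in>T. y P \<in> ball (x P) 1) \<and>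
                        (\<forall>P. P \<notin> S \<and> P \<notin> T \<longrightarrow> is_unit_at (y P))}"
  have "0 \<notin> ball (x P) 1" for P
    using is_unit_at_if_dist_less_1(1)[OF x_units] by (auto simp: is_unit_at_def)
  then have "B \<in> idele_basis S"
    unfolding idele_basis_def B_def using T
    by (intro CollectI exI[of _ T] exI[of _ "\<lambda>P. ball (x P) 1"]) (auto simp: mem_ball)
  then have B_open: "openin (idele_top S) B"
    unfolding idele_top_def by (rule topology_generated_by_Basis)
  have "proj_away S x \<in> B"
    using proj_away_in_ideles_if_units[OF x_units] x_units T(2)
    by (auto simp: B_def proj_away_def)
  moreover have "proj_away S x \<in> (idele_top S) closure_of (diag S ` {f. f \<noteq> 0})"
    using sa proj_away_in_ideles_if_units[OF x_units, of "{}"]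
    by (auto simp: strong_approx_Gm_def proj_away_def)
  ultimately obtain f where "f \<noteq> 0" and f_in_B: "diag S f \<in> B"
    using B_open unfolding in_closure_of by blast
  show thesis
  proof
    show "f \<noteq> 0" by fact
    fix P assume "P \<notin> S"
    with f_in_B have "P \<in> T \<Longrightarrow> dist (x P) (completion_emb P f) < 1"
      and "P \<notin> T \<Longrightarrow> is_unit_at (completion_emb P f)"
      by (auto simp: B_def diag_def)
    then show "is_unit_at (completion_emb P f)"
      using is_unit_at_if_dist_less_1(1)[OF x_units] by blast
  next
    fix P assume "P \<in> T"
    moreover from this T(2) have "P \<notin> S" by blast
    ultimately have "dist (x P) (completion_emb P f) < 1"
      using f_in_B by (auto simp: B_def diag_def)
    then show "completion_emb P f $$ 0 = x P $$ 0"
      by (rule is_unit_at_if_dist_less_1(2)[OF x_units])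
  qed
qed

lemma poly_eq_lead_coeff_prod_roots:
  fixes p :: "complex poly"
  assumes "p \<noteq> 0" "finite A" "\<And>z. poly p z = 0 \<Longrightarrow> z \<in> A"
  shows "poly p b = lead_coeff p * (\<Prod>z\<in>A. (b - z) ^ order z p)"
proof -
  have "poly p b = lead_coeff p * (\<Prod>z | poly p z = 0. (b - z) ^ order z p)"
    by (subst complex_poly_decompose[symmetric, of p]) (simp add: poly_prod)
  also have "(\<Prod>z | poly p z = 0. (b - z) ^ order z p) = (\<Prod>z\<in>A. (b - z) ^ order z p)"
  proof (rule prod.mono_neutral_left)
    show "\<forall>z\<in>A - {z. poly p z = 0}. (b - z) ^ order z p = 1"
      using order_root[of p] assms(1) by auto
  qed (use assms poly_roots_finite in auto)
  finally show ?thesis .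
qed

definition poly_value_ratios :: "complex set \<Rightarrow> complex \<Rightarrow> complex \<Rightarrow> complex set" where
  "poly_value_ratios A b\<^sub>0 b\<^sub>1 = {poly p b\<^sub>1 / poly p b\<^sub>0 | p. \<forall>b. b \<notin> A \<longrightarrow> poly p b \<noteq> 0}"

lemma countable_poly_value_ratios:
  assumes "finite A"
  shows "countable (poly_value_ratios A b\<^sub>0 b\<^sub>1)"
proof -
  have "poly_value_ratios A b\<^sub>0 b\<^sub>1 \<subseteq>
          (\<lambda>n. \<Prod>z\<in>A. ((b\<^sub>1 - z) / (b\<^sub>0 - z)) ^ n z) ` PiE A (\<lambda>_. UNIV)"
  proof
    fix r assume "r \<in> poly_value_ratios A b\<^sub>0 b\<^sub>1"
    then obtain p where r: "r = poly p b\<^sub>1 / poly p b\<^sub>0" and roots: "\<And>b. b \<notin> A \<Longrightarrow> poly p b \<noteq> 0"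
      by (auto simp: poly_value_ratios_def)
    have "p \<noteq> 0"
      using roots ex_new_if_finite[OF infinite_UNIV_char_0 assms] by auto
    moreover have "\<And>z. poly p z = 0 \<Longrightarrow> z \<in> A"
      using roots by blast
    ultimately have "r = (\<Prod>z\<in>A. (b\<^sub>1 - z) ^ order z p) / (\<Prod>z\<in>A. (b\<^sub>0 - z) ^ order z p)"
      using r by (simp add: poly_eq_lead_coeff_prod_roots[OF _ assms])
    also have "\<dots> = (\<Prod>z\<in>A. ((b\<^sub>1 - z) / (b\<^sub>0 - z)) ^ restrict (\<lambda>z. order z p) A z)"
      by (simp add: prod_dividef power_divide)
    finally show "r \<in> (\<lambda>n. \<Prod>z\<in>A. ((b\<^sub>1 - z) / (b\<^sub>0 - z)) ^ n z) ` PiE A (\<lambda>_. UNIV)"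
      by (rule image_eqI[of _ _ "restrict (\<lambda>z. order z p) A"]) auto
  qed
  moreover have "countable (PiE A (\<lambda>_. UNIV :: nat set))"
    using assms by (simp add: countable_PiE)
  ultimately show ?thesis
    by (blast intro: countable_subset countable_image)
qed

lemma completion_emb_value_in_poly_value_ratios:
  assumes units: "\<And>b. b \<notin> A \<Longrightarrow> is_unit_at (completion_emb (Some b) f)"
    and "b\<^sub>0 \<notin> A" "b\<^sub>1 \<notin> A" and f_b\<^sub>0: "completion_emb (Some b\<^sub>0) f $$ 0 = 1"
  shows "completion_emb (Some b\<^sub>1) f $$ 0 \<in>
           (\<lambda>(u, v). u / v) ` (poly_value_ratios A b\<^sub>0 b\<^sub>1 \<times> poly_value_ratios A b\<^sub>0 b\<^sub>1)"
proof -
  obtain p q where pq: "quot_of_fract f = (p, q)"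
    by (cases "quot_of_fract f")
  note f_at = completion_emb_Some_unit[OF pq units]
  have "completion_emb (Some b\<^sub>1) f $$ 0 = (poly p b\<^sub>1 / poly p b\<^sub>0) / (poly q b\<^sub>1 / poly q b\<^sub>0)"
    using f_b\<^sub>0 f_at[OF \<open>b\<^sub>0 \<notin> A\<close>] f_at[OF \<open>b\<^sub>1 \<notin> A\<close>] by (simp add: field_simps)
  moreover have "poly p b\<^sub>1 / poly p b\<^sub>0 \<in> poly_value_ratios A b\<^sub>0 b\<^sub>1"
    "poly q b\<^sub>1 / poly q b\<^sub>0 \<in> poly_value_ratios A b\<^sub>0 b\<^sub>1"
    using f_at(1,2) by (auto simp: poly_value_ratios_def)
  ultimately show ?thesis
    by (force intro: image_eqI[of _ _ "(poly p b\<^sub>1 / poly p b\<^sub>0, poly q b\<^sub>1 / poly q b\<^sub>0)"])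
qed

theorem proposition4p1:
  fixes S :: "complex option set"
  assumes "finite S"
  shows "\<not> strong_approx_Gm S"
proof
  assume sa: "strong_approx_Gm S"
  define A where "A = Some -` S"
  have "finite A" unfolding A_def using assms by (simp add: finite_vimageI)
  then obtain b\<^sub>0 b\<^sub>1 where b\<^sub>0: "b\<^sub>0 \<notin> A" and b\<^sub>1: "b\<^sub>1 \<notin> A" "b\<^sub>1 \<noteq> b\<^sub>0"
    by (metis ex_new_if_finite finite_insert infinite_UNIV_char_0 insertCI)
  define R where "R = (\<lambda>(u, v). u / v) ` (poly_value_ratios A b\<^sub>0 b\<^sub>1 \<times> poly_value_ratios A b\<^sub>0 b\<^sub>1)"
  have "countable (insert 0 R)"
    unfolding R_def using countable_poly_value_ratios[OF \<open>finite A\<close>] by auto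
  then obtain c :: complex where c: "c \<notin> insert 0 R"
    using uncountable_UNIV_complex by (metis UNIV_eq_I)
  define x where "x = (\<lambda>P. if P = Some b\<^sub>1 then fls_const c else 1)"
  have x_units: "\<And>P. is_unit_at (x P)"
    using c by (simp add: x_def is_unit_at_def)
  have T: "finite {Some b\<^sub>0, Some b\<^sub>1}" "{Some b\<^sub>0, Some b\<^sub>1} \<inter> S = {}"
    using b\<^sub>0 b\<^sub>1 by (auto simp: A_def)
  obtain f where "f \<noteq> 0" and f_units: "\<And>P. P \<notin> S \<Longrightarrow> is_unit_at (completion_emb P f)"
    and f_approx: "\<And>P. P \<in> {Some b\<^sub>0, Some b\<^sub>1} \<Longrightarrow> completion_emb P f $$ 0 = x P $$ 0"
    by (rule strong_approx_Gm_unit_approx[where x = x, OF sa T x_units]) blast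
  have "completion_emb (Some b\<^sub>1) f $$ 0 \<in> R"
    unfolding R_def using f_units f_approx b\<^sub>0 b\<^sub>1
    by (intro completion_emb_value_in_poly_value_ratios) (simp_all add: A_def x_def)
  with f_approx c show False
    by (simp add: x_def)
qed

end
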